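(* Let $n$ be a nonnegative integer and $0<\pi<1$. Let $T$ be the random variable with probability mass function $$P(T=t)=\sum_{k=0}^n \#\mathcal{P}_{k,n-k}(t)\,(1-\pi)^{n-k}\pi^k,\qquad t=0,1,\dots,\lfloor n^2/4\rfloor,$$ and $0$ otherwise. Then $$E(T)=\binom{n}{2}\pi(1-\pi),\qquad E(T^2)=\binom{n}{2}\pi(1-\pi)\left(\frac{2n-1}{3}+\binom{n-2}{2}\pi(1-\pi)\right),$$ and consequently $$V(T)=\binom{n}{2}\pi(1-\pi)\left(\frac{2n-1}{3}-\pi(1-\pi)(2n-3)\right).$$
   Context: For integers $k\ge0$ and $m$, $\#\mathcal{P}_{k,m}(t)$ denotes the number of integer tuples $(\lambda_1,\dots,\lambda_k)$ with $m\ge\lambda_1\ge\cdots\ge\lambda_k\ge0$ and $\lambda_1+\cdots+\lambda_k=t$. Interpretation: in $n$ independent Bernoulli trials each with success probability $\pi$, $T$ is the total, over all successes, of the number of failures occurring after that success (the number of pairs (success, later failure)). Binomial coefficients $\binom{a}{b}$ with $b>a\ge0$ or $b<0$ are $0$. *)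

theory Defs
  imports Complex_Main
begin

text \<open>Number of integer tuples (l_1,...,l_k) with m \<ge> l_1 \<ge> ... \<ge> l_k \<ge> 0 and sum t,
  represented as nat lists of length k sorted non-increasingly.\<close>
definition num_part :: "nat \<Rightarrow> nat \<Rightarrow> nat \<Rightarrow> nat" where
  "num_part k m t = card {l :: nat list. length l = k \<and> sorted_wrt (\<ge>) l \<and>
      (\<forall>x\<in>set l. x \<le> m) \<and> sum_list l = t}"

definition T_pmf :: "nat \<Rightarrow> real \<Rightarrow> nat \<Rightarrow> real" where
  "T_pmf n p t = (if t \<le> n^2 div 4
      then (\<Sum>k=0..n. real (num_part k (n - k) t) * (1 - p)^(n - k) * p^k) else 0)"

definition T_mean :: "nat \<Rightarrow> real \<Rightarrow> real" where
  "T_mean n p = (\<Sum>t=0..n^2 div 4. real t * T_pmf n p t)"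

definition T_second_moment :: "nat \<Rightarrow> real \<Rightarrow> real" where
  "T_second_moment n p = (\<Sum>t=0..n^2 div 4. (real t)^2 * T_pmf n p t)"

definition T_var :: "nat \<Rightarrow> real \<Rightarrow> real" where
  "T_var n p = T_second_moment n p - (T_mean n p)^2"

end

theory Submission
  imports Defs
begin

(* Grouping the mass function by k, the j-th moment of T is the sum over k of
   p^k (1 - p)^(n - k) M_j(k, n - k), where M_j(k, m) is the j-th power sum of the sizes of the
   partitions fitting in a k x m box.  A partition in a (k + 1) x (m + 1) box either fits in a
   (k + 1) x m box or has largest part m + 1; this Pascal-type recursion gives M_0 = C,
   M_1 = C km/2 and M_2 = C (km(k + m + 1)/12 + (km/2)^2) with C = binom(k + m, k).  Hence E(T^j)
   is the expectation of a polynomial in (K, n - K) for K binomially distributed, and the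
   factorial moments E(K^(i) (n - K)^(j)) = n^(i + j) p^i (1 - p)^j turn it into a polynomial
   in n and p. *)

definition ffact :: "'a::comm_ring_1 \<Rightarrow> nat \<Rightarrow> 'a" where
  "ffact x i = (\<Prod>r = 0..<i. x - of_nat r)"

lemma ffact_0 [simp]: "ffact x 0 = 1"
  by (simp add: ffact_def)

lemma ffact_Suc: "ffact x (Suc i) = ffact x i * (x - of_nat i)"
  by (simp add: ffact_def)

lemma ffact_zero_Suc [simp]: "ffact 0 (Suc i) = 0"
  by (induction i) (simp_all add: ffact_Suc)

lemma ffact_plus_one: "ffact (x + 1) i = ffact x i + of_nat i * ffact x (i - 1)"
proof (induction i)
  case (Suc i)
  then show ?case
    by (cases i) (simp_all add: ffact_Suc algebra_simps)
qed simp

lemma of_nat_choose_ffact: "(of_nat (n choose k) :: 'a::field_char_0) = ffact (of_nat n) k / fact k"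
  by (simp add: binomial_gbinomial gbinomial_mult_fact[symmetric] ffact_def)

definition binomial_expectation :: "real \<Rightarrow> (real \<Rightarrow> real \<Rightarrow> real) \<Rightarrow> nat \<Rightarrow> real" where
  "binomial_expectation p g n =
     (\<Sum>k=0..n. real (n choose k) * p^k * (1 - p)^(n - k) * g (real k) (real (n - k)))"

lemma binomial_expectation_0 [simp]: "binomial_expectation p g 0 = g 0 0"
  by (simp add: binomial_expectation_def)

lemma binomial_expectation_add:
  "binomial_expectation p (\<lambda>a b. f a b + g a b) n = binomial_expectation p f n + binomial_expectation p g n"
  by (simp add: binomial_expectation_def sum.distrib algebra_simps)

lemma binomial_expectation_cmult:
  "binomial_expectation p (\<lambda>a b. c * f a b) n = c * binomial_expectation p f n"
  by (simp add: binomial_expectation_def sum_distrib_left algebra_simps)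

lemma binomial_expectation_Suc:
  "binomial_expectation p g (Suc n) =
     p * binomial_expectation p (\<lambda>a b. g (a + 1) b) n + (1 - p) * binomial_expectation p (\<lambda>a b. g a (b + 1)) n"
proof -
  \<comment> \<open>Pascal's rule splits the sum according to the outcome of one trial.\<close>
  define q where "q = 1 - p"
  define h where "h k = real (n choose k) * p^k * q^(Suc n - k) * g (real k) (real (Suc n - k))" for k
  have "binomial_expectation p g (Suc n) =
      h 0 + (\<Sum>k=0..n. real (Suc n choose Suc k) * p^Suc k * q^(n - k) * g (1 + real k) (real (n - k)))"
    unfolding binomial_expectation_def by (subst sum.atLeast0_atMost_Suc_shift) (simp add: h_def q_def)
  also have "\<dots> =
      h 0 + (\<Sum>k=0..n. real (n choose k) * p^Suc k * q^(n - k) * g (1 + real k) (real (n - k)) + h (Suc k))"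
    by (simp add: h_def algebra_simps)
  also have "\<dots> = p * binomial_expectation p (\<lambda>a b. g (a + 1) b) n + (h 0 + (\<Sum>k=0..n. h (Suc k)))"
    by (simp add: binomial_expectation_def sum.distrib sum_distrib_left q_def algebra_simps)
  also have "h 0 + (\<Sum>k=0..n. h (Suc k)) = (\<Sum>k=0..Suc n. h k)"
    by (simp only: sum.atLeast0_atMost_Suc_shift comp_def)
  also have "(\<Sum>k=0..Suc n. h k) = (\<Sum>k=0..n. h k)"
    by (simp add: h_def)
  also have "\<dots> = (1 - p) * binomial_expectation p (\<lambda>a b. g a (b + 1)) n"
    unfolding binomial_expectation_def sum_distrib_left
    by (rule sum.cong) (auto simp: h_def q_def Suc_diff_le algebra_simps)
  finally show ?thesis .
qed

lemma binomial_expectation_ffact: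
  "binomial_expectation p (\<lambda>a b. ffact a i * ffact b j) n = ffact (real n) (i + j) * p^i * (1 - p)^j"
proof (induction n arbitrary: i j)
  case 0
  then show ?case
    by (cases i; cases j) simp_all
next
  case (Suc n)
  let ?F = "ffact (real n)" and ?q = "1 - p"
  have success: "p * (of_nat i * (?F (i - 1 + j) * p^(i - 1) * ?q^j)) = of_nat i * ?F (i + j - 1) * p^i * ?q^j"
    by (cases i) simp_all
  have failure: "?q * (of_nat j * (?F (i + (j - 1)) * p^i * ?q^(j - 1))) = of_nat j * ?F (i + j - 1) * p^i * ?q^j"
    by (cases j) simp_all
  have "binomial_expectation p (\<lambda>a b. ffact a i * ffact b j) (Suc n) =
      p * (binomial_expectation p (\<lambda>a b. ffact a i * ffact b j) n
           + of_nat i * binomial_expectation p (\<lambda>a b. ffact a (i - 1) * ffact b j) n)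
    + ?q * (binomial_expectation p (\<lambda>a b. ffact a i * ffact b j) n
           + of_nat j * binomial_expectation p (\<lambda>a b. ffact a i * ffact b (j - 1)) n)"
    unfolding binomial_expectation_Suc ffact_plus_one
    by (simp add: binomial_expectation_def sum.distrib sum_distrib_left algebra_simps)
  also have "\<dots> = (p + ?q) * (?F (i + j) * p^i * ?q^j)
      + p * (of_nat i * (?F (i - 1 + j) * p^(i - 1) * ?q^j))
      + ?q * (of_nat j * (?F (i + (j - 1)) * p^i * ?q^(j - 1)))"
    by (simp only: Suc.IH) (simp add: algebra_simps)
  also have "\<dots> = (?F (i + j) + of_nat (i + j) * ?F (i + j - 1)) * p^i * ?q^j"
    unfolding success failure by (simp add: algebra_simps)
  also have "\<dots> = ffact (real (Suc n)) (i + j) * p^i * ?q^j"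
    using ffact_plus_one[of "real n" "i + j"] by (simp add: add.commute)
  finally show ?case .
qed

definition box_partitions :: "nat \<Rightarrow> nat \<Rightarrow> nat list set" where
  "box_partitions k m = {l. length l = k \<and> sorted_wrt (\<ge>) l \<and> (\<forall>x\<in>set l. x \<le> m)}"

definition box_moment :: "nat \<Rightarrow> nat \<Rightarrow> nat \<Rightarrow> real" where
  "box_moment j k m = (\<Sum>l\<in>box_partitions k m. real (sum_list l) ^ j)"

lemma finite_box_partitions: "finite (box_partitions k m)"
proof (rule finite_subset)
  show "box_partitions k m \<subseteq> {l. set l \<subseteq> {0..m} \<and> length l = k}"
    unfolding box_partitions_def by auto
qed (rule finite_lists_length_eq, simp)

lemma box_partitions_0_left: "box_partitions 0 m = {[]}"
  unfolding box_partitions_def by auto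

lemma box_partitions_0_right: "box_partitions k 0 = {replicate k 0}"
  unfolding box_partitions_def
  by (auto simp: sorted_wrt_iff_nth_less replicate_length_same[symmetric])

lemma box_partitions_Suc_Suc:
  "box_partitions (Suc k) (Suc m) = box_partitions (Suc k) m \<union> (Cons (Suc m)) ` box_partitions k (Suc m)"
proof safe
  fix l assume l: "l \<in> box_partitions (Suc k) (Suc m)" "l \<notin> Cons (Suc m) ` box_partitions k (Suc m)"
  then obtain x xs where "l = x # xs"
    unfolding box_partitions_def by (cases l) auto
  with l show "l \<in> box_partitions (Suc k) m"
    unfolding box_partitions_def by (cases "x = Suc m") auto
qed (auto simp: box_partitions_def)

lemma box_moment_Suc_Suc:
  "box_moment j (Suc k) (Suc m) =
     box_moment j (Suc k) m + (\<Sum>l\<in>box_partitions k (Suc m). (real (Suc m) + real (sum_list l)) ^ j)"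
proof -
  have "box_partitions (Suc k) m \<inter> Cons (Suc m) ` box_partitions k (Suc m) = {}"
    unfolding box_partitions_def by auto
  then have "box_moment j (Suc k) (Suc m) =
      box_moment j (Suc k) m + (\<Sum>l\<in>Cons (Suc m) ` box_partitions k (Suc m). real (sum_list l) ^ j)"
    unfolding box_moment_def box_partitions_Suc_Suc
    by (intro sum.union_disjoint) (simp_all add: finite_box_partitions)
  then show ?thesis
    by (simp add: sum.reindex add.assoc)
qed

lemma box_moment_0_left: "box_moment j 0 m = (if j = 0 then 1 else 0)"
  by (simp add: box_moment_def box_partitions_0_left)

lemma box_moment_0_right: "box_moment j k 0 = (if j = 0 then 1 else 0)"
  by (simp add: box_moment_def box_partitions_0_right)

lemma nat_grid_induct [case_names zero_left zero_right Suc_Suc]: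
  assumes "\<And>m. P 0 m" and "\<And>k. P k 0"
    and "\<And>k m. P (Suc k) m \<Longrightarrow> P k (Suc m) \<Longrightarrow> P (Suc k) (Suc m)"
  shows "P k m"
proof (induction k arbitrary: m)
  case (Suc k)
  show ?case
    by (induction m) (use assms Suc in auto)
qed (rule assms(1))

lemma of_nat_choose_Suc_left:
  "real ((Suc k + m) choose Suc k) = real ((k + Suc m) choose k) * (real m + 1) / (real k + 1)"
proof -
  have "Suc k * ((k + Suc m) choose Suc k) = Suc m * ((k + Suc m) choose k)"
    using binomial_absorption[of k "k + Suc m"] binomial_absorb_comp[of "k + Suc m" k] by simp
  then have "real (Suc k) * real ((k + Suc m) choose Suc k) = real (Suc m) * real ((k + Suc m) choose k)"
    by (metis of_nat_mult)
  then show ?thesis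
    by (simp add: field_simps)
qed

lemma of_nat_choose_Suc_Suc:
  "real ((Suc k + Suc m) choose Suc k) = real ((Suc k + m) choose Suc k) + real ((k + Suc m) choose k)"
  by simp

lemma box_moment_zero: "box_moment 0 k m = real ((k + m) choose k)"
proof (induction k m rule: nat_grid_induct)
  case (Suc_Suc k m)
  have "box_moment 0 (Suc k) (Suc m) = box_moment 0 (Suc k) m + box_moment 0 k (Suc m)"
    by (subst box_moment_Suc_Suc) (simp add: box_moment_def)
  then show ?case
    using Suc_Suc of_nat_choose_Suc_Suc by simp
qed (simp_all add: box_moment_0_left box_moment_0_right)

lemma box_moment_one: "box_moment 1 k m = real ((k + m) choose k) * (real k * real m / 2)"
proof (induction k m rule: nat_grid_induct)
  case (Suc_Suc k m)
  have "box_moment 1 (Suc k) (Suc m) =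
      box_moment 1 (Suc k) m + (real m + 1) * box_moment 0 k (Suc m) + box_moment 1 k (Suc m)"
    by (subst box_moment_Suc_Suc) (simp add: box_moment_def sum.distrib algebra_simps)
  also have "\<dots> = real ((Suc k + Suc m) choose Suc k) * (real (Suc k) * real (Suc m) / 2)"
    \<comment> \<open>two passes, since \<open>of_nat_choose_Suc_left\<close> also matches the left side of Pascal's rule\<close>
    unfolding Suc_Suc box_moment_zero of_nat_choose_Suc_Suc
    unfolding of_nat_choose_Suc_left
    by (simp add: field_simps)
  finally show ?case .
qed (simp_all add: box_moment_0_left box_moment_0_right)

lemma box_moment_two:
  "box_moment 2 k m =
     real ((k + m) choose k) * (real k * real m * (real k + real m + 1) / 12 + (real k * real m / 2)^2)"
proof (induction k m rule: nat_grid_induct)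
  case (Suc_Suc k m)
  have "box_moment 2 (Suc k) (Suc m) =
      box_moment 2 (Suc k) m + (real m + 1)^2 * box_moment 0 k (Suc m)
      + 2 * (real m + 1) * box_moment 1 k (Suc m) + box_moment 2 k (Suc m)"
    by (subst box_moment_Suc_Suc) (simp add: box_moment_def sum.distrib power2_sum sum_distrib_left algebra_simps)
  also have "\<dots> = real ((Suc k + Suc m) choose Suc k) * (real (Suc k) * real (Suc m)
      * (real (Suc k) + real (Suc m) + 1) / 12 + (real (Suc k) * real (Suc m) / 2)^2)"
    unfolding Suc_Suc box_moment_zero box_moment_one of_nat_choose_Suc_Suc
    unfolding of_nat_choose_Suc_left
    by (simp add: field_simps power2_eq_square)
  finally show ?case .
qed (simp_all add: box_moment_0_left box_moment_0_right)

lemma sum_list_le_box: "l \<in> box_partitions k m \<Longrightarrow> sum_list l \<le> k * m"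
  unfolding box_partitions_def using sum_list_mono[of l "\<lambda>x. x" "\<lambda>_. m"] by (auto simp: sum_list_triv)

lemma mult_diff_le_square_div_4:
  fixes k n :: nat
  shows "k * (n - k) \<le> n^2 div 4"
proof (cases "k \<le> n")
  case True
  have "real (4 * (k * (n - k))) \<le> real (n^2)"
    using True zero_le_power2[of "2 * real k - real n"] by (simp add: of_nat_diff power2_eq_square algebra_simps)
  then show ?thesis
    by (simp only: of_nat_le_iff)
qed simp

lemma num_part_eq_card: "num_part k m t = card {l \<in> box_partitions k m. sum_list l = t}"
  unfolding num_part_def box_partitions_def by (rule arg_cong[where f = card]) auto

lemma sum_power_num_part:
  "(\<Sum>t=0..n^2 div 4. real t ^ j * real (num_part k (n - k) t)) = box_moment j k (n - k)"
proof -
  let ?B = "box_partitions k (n - k)"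
  have fibre: "real t ^ j * real (num_part k (n - k) t) = (\<Sum>l\<in>{l \<in> ?B. sum_list l = t}. real (sum_list l) ^ j)"
    for t
  proof -
    have "(\<Sum>l\<in>{l \<in> ?B. sum_list l = t}. real (sum_list l) ^ j) = (\<Sum>l\<in>{l \<in> ?B. sum_list l = t}. real t ^ j)"
      by (rule sum.cong) auto
    then show ?thesis
      by (simp add: num_part_eq_card)
  qed
  have "(\<Sum>t=0..n^2 div 4. real t ^ j * real (num_part k (n - k) t))
      = (\<Sum>t=0..n^2 div 4. \<Sum>l\<in>{l \<in> ?B. sum_list l = t}. real (sum_list l) ^ j)"
    unfolding fibre ..
  also have "\<dots> = box_moment j k (n - k)"
    unfolding box_moment_def
  proof (rule sum.group)
    show "sum_list ` ?B \<subseteq> {0..n^2 div 4}"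
      using le_trans[OF sum_list_le_box mult_diff_le_square_div_4] by auto
  qed (simp_all add: finite_box_partitions)
  finally show ?thesis .
qed

lemma T_pmf_moment:
  assumes "\<And>k m. box_moment j k m = real ((k + m) choose k) * g (real k) (real m)"
  shows "(\<Sum>t=0..n^2 div 4. real t ^ j * T_pmf n p t) = binomial_expectation p g n"
proof -
  have "(\<Sum>t=0..n^2 div 4. real t ^ j * T_pmf n p t)
      = (\<Sum>k=0..n. (\<Sum>t=0..n^2 div 4. real t ^ j * real (num_part k (n - k) t)) * ((1 - p)^(n - k) * p^k))"
    by (simp add: T_pmf_def sum_distrib_left sum_distrib_right mult_ac sum.swap[of _ "{0..n}"])
  also have "\<dots> = (\<Sum>k=0..n. box_moment j k (n - k) * ((1 - p)^(n - k) * p^k))"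
    by (rule sum.cong) (simp_all add: sum_power_num_part)
  also have "\<dots> = binomial_expectation p g n"
    unfolding binomial_expectation_def by (rule sum.cong) (simp_all add: assms mult_ac)
  finally show ?thesis .
qed

lemma of_nat_choose_two: "real (n choose 2) = real n * (real n - 1) / 2"
  by (simp add: of_nat_choose_ffact eval_nat_numeral ffact_Suc)

lemma of_nat_choose_two_mult_choose_two:
  "real (n choose 2) * real ((n - 2) choose 2) = real n * (real n - 1) * (real n - 2) * (real n - 3) / 4"
proof (cases "n \<ge> 2")
  case True
  then show ?thesis
    by (simp add: of_nat_choose_two of_nat_diff field_simps)
next
  case False
  then have "n = 0 \<or> n = 1"
    by auto
  then show ?thesis
    by auto
qed

lemma T_mean_eq: "T_mean n p = real (n choose 2) * p * (1 - p)"
proof -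
  have "T_mean n p = (\<Sum>t=0..n^2 div 4. real t ^ 1 * T_pmf n p t)"
    by (simp add: T_mean_def)
  also have "\<dots> = binomial_expectation p (\<lambda>a b. 1/2 * (ffact a 1 * ffact b 1)) n"
    by (rule T_pmf_moment) (simp only: box_moment_one, simp add: ffact_Suc)
  also have "\<dots> = real (n choose 2) * p * (1 - p)"
    unfolding of_nat_choose_two
    by (simp only: binomial_expectation_cmult binomial_expectation_ffact) (simp add: eval_nat_numeral ffact_Suc)
  finally show ?thesis .
qed

lemma T_second_moment_eq:
  "T_second_moment n p = real (n choose 2) * p * (1 - p) *
     ((2 * real n - 1) / 3 + real ((n - 2) choose 2) * p * (1 - p))"
proof -
  have "T_second_moment n p = (\<Sum>t=0..n^2 div 4. real t ^ 2 * T_pmf n p t)"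
    by (simp add: T_second_moment_def)
  \<comment> \<open>the closed form of \<open>box_moment 2\<close> in the basis of products of falling factorials\<close>
  also have "\<dots> = binomial_expectation p (\<lambda>a b. 1/4 * (ffact a 2 * ffact b 2)
      + (1/3 * (ffact a 2 * ffact b 1) + (1/3 * (ffact a 1 * ffact b 2) + 1/2 * (ffact a 1 * ffact b 1)))) n"
    by (rule T_pmf_moment) (simp only: box_moment_two, simp add: eval_nat_numeral ffact_Suc field_simps)
  also have "\<dots> = 1/4 * ffact (real n) 4 * p^2 * (1 - p)^2
      + 1/3 * ffact (real n) 3 * p * (1 - p) + 1/2 * ffact (real n) 2 * p * (1 - p)"
    by (simp only: binomial_expectation_add binomial_expectation_cmult binomial_expectation_ffact)
      (simp add: eval_nat_numeral field_simps power2_eq_square)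
  also have "\<dots> = real (n choose 2) * p * (1 - p) * (2 * real n - 1) / 3
      + (real (n choose 2) * real ((n - 2) choose 2)) * p^2 * (1 - p)^2"
    unfolding of_nat_choose_two_mult_choose_two unfolding of_nat_choose_two
    by (simp add: eval_nat_numeral ffact_Suc field_simps)
  also have "\<dots> = real (n choose 2) * p * (1 - p) *
     ((2 * real n - 1) / 3 + real ((n - 2) choose 2) * p * (1 - p))"
    by (simp add: field_simps power2_eq_square)
  finally show ?thesis .
qed

lemma T_var_eq:
  "T_var n p = real (n choose 2) * p * (1 - p) * ((2 * real n - 1) / 3 - p * (1 - p) * (2 * real n - 3))"
proof -
  have "T_var n p = real (n choose 2) * p * (1 - p) * (2 * real n - 1) / 3
      + (real (n choose 2) * real ((n - 2) choose 2) - real (n choose 2)^2) * p^2 * (1 - p)^2"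
    unfolding T_var_def T_second_moment_eq T_mean_eq by (simp add: field_simps power2_eq_square)
  also have "\<dots> = real (n choose 2) * p * (1 - p) * ((2 * real n - 1) / 3 - p * (1 - p) * (2 * real n - 3))"
    unfolding of_nat_choose_two_mult_choose_two unfolding of_nat_choose_two
    by (simp add: field_simps power2_eq_square)
  finally show ?thesis .
qed

theorem theorem2:
  fixes n :: nat and p :: real
  assumes "0 < p" and "p < 1"
  shows "T_mean n p = real (n choose 2) * p * (1 - p) \<and>
         T_second_moment n p = real (n choose 2) * p * (1 - p) *
           ((2 * real n - 1) / 3 + real ((n - 2) choose 2) * p * (1 - p)) \<and>
         T_var n p = real (n choose 2) * p * (1 - p) *
           ((2 * real n - 1) / 3 - p * (1 - p) * (2 * real n - 3))"
  using T_mean_eq T_second_moment_eq T_var_eq by blast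

end
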